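(* With notation as in the context, $\mathrm{REL}(\Gamma)=\mathrm{REL}_{\mathcal{W}}$.
   Context: $\Gamma$ is a geometrically finite, non-cocompact Fuchsian group acting on the upper half-plane $\mathbb{H}$, containing hyperbolic but no parabolic elements, with $\Gamma\backslash\mathbb{H}$ of infinite area, and whose ordinary set contains a neighborhood of $\infty$. For $g=\begin{bmatrix}a&b\\c&d\end{bmatrix}\in\mathrm{PSL}_2(\mathbb{R})$ with $c\neq0$ let $\mathrm{I}(g)=\{z\in\mathbb{H}:|cz+d|=1\}$ and $\mathrm{ext}\,\mathrm{I}(g)=\{z:|cz+d|>1\}$. Let $\mathcal{K}=\bigcap_{g\in\Gamma\setminus\{\mathrm{id}\}}\mathrm{ext}\,\mathrm{I}(g)$ and $\mathrm{REL}(\Gamma)$ the set of $\mathrm{I}(g)$, $g\in\Gamma\setminus\{\mathrm{id}\}$, such that $\mathrm{I}(g)\cap\partial\mathcal{K}$ contains more than one point ($\partial$ = boundary in $\mathbb{H}$); $\Gamma_{\mathrm{REL}}$ is the set of such $g$. With $\mathrm{pr}_\infty(x+iy)=x$, let $\alpha$ (resp. $\beta$) be the largest (resp. smallest) real number with $\partial\mathcal{K}\subseteq\mathrm{pr}_\infty^{-1}([\alpha,\beta])$, fix $\alpha'<\alpha$, $\beta'>\beta$, $\lambda=\beta'-\alpha'$, $t_\lambda=\begin{bmatrix}1&\lambda\\0&1\end{bmatrix}$, $\mathcal{W}=\mathcal{K}\cap\mathrm{pr}_\infty^{-1}((\alpha',\beta'))$, and $\Gamma_{\mathcal{W}}$ the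 group generated by $\Gamma_{\mathrm{REL}}\cup\{t_\lambda\}$ (a Fuchsian group). $\mathrm{REL}_{\mathcal{W}}$ is the set of isometric spheres $\mathrm{I}(g)$, $g\in\Gamma_{\mathcal{W}}$ not fixing $\infty$, such that $\mathrm{I}(g)\cap\partial\mathcal{W}$ contains more than one point. *)

theory Defs
  imports "HOL-Analysis.Analysis"
begin

text \<open>Elements of SL(2,R) are quadruples (a,b,c,d) standing for the matrix [a b; c d].
  A Fuchsian group (subgroup of PSL(2,R)) is represented by its full preimage in SL(2,R),
  i.e. a subgroup containing -I; g is the identity of PSL(2,R) iff g = I or g = -I.\<close>

type_synonym mat2 = "real \<times> real \<times> real \<times> real"

definition SL2 :: "mat2 set" where
  "SL2 = {(a,b,c,d). a*d - b*c = 1}"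

definition mid :: mat2 where "mid = (1,0,0,1)"

definition mneg :: "mat2 \<Rightarrow> mat2" where
  "mneg = (\<lambda>(a,b,c,d). (-a,-b,-c,-d))"

definition mmul :: "mat2 \<Rightarrow> mat2 \<Rightarrow> mat2" where
  "mmul = (\<lambda>(a,b,c,d) (a',b',c',d'). (a*a' + b*c', a*b' + b*d', c*a' + d*c', c*b' + d*d'))"

definition minv :: "mat2 \<Rightarrow> mat2" where
  "minv = (\<lambda>(a,b,c,d). (d,-b,-c,a))"

definition mtrace :: "mat2 \<Rightarrow> real" where
  "mtrace = (\<lambda>(a,b,c,d). a + d)"

definition mc :: "mat2 \<Rightarrow> real" where "mc = (\<lambda>(a,b,c,d). c)"
definition md :: "mat2 \<Rightarrow> real" where "md = (\<lambda>(a,b,c,d). d)"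

definition is_id_psl :: "mat2 \<Rightarrow> bool" where
  "is_id_psl g \<longleftrightarrow> g = mid \<or> g = mneg mid"

definition mob :: "mat2 \<Rightarrow> complex \<Rightarrow> complex" where
  "mob = (\<lambda>(a,b,c,d) z. (of_real a * z + of_real b) / (of_real c * z + of_real d))"

definition uhp :: "complex set" where "uhp = {z. Im z > 0}"

definition fuchsian_group :: "mat2 set \<Rightarrow> bool" where
  "fuchsian_group G \<longleftrightarrow> G \<subseteq> SL2 \<and> mid \<in> G \<and> mneg mid \<in> G
     \<and> (\<forall>g\<in>G. \<forall>h\<in>G. mmul g h \<in> G) \<and> (\<forall>g\<in>G. minv g \<in> G)
     \<and> (\<forall>g\<in>G. \<exists>e>0. \<forall>h\<in>G. dist h g < e \<longrightarrow> h = g)"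

definition hyperbolic_elt :: "mat2 \<Rightarrow> bool" where
  "hyperbolic_elt g \<longleftrightarrow> \<bar>mtrace g\<bar> > 2"

definition parabolic_elt :: "mat2 \<Rightarrow> bool" where
  "parabolic_elt g \<longleftrightarrow> \<bar>mtrace g\<bar> = 2 \<and> \<not> is_id_psl g"

definition hdist :: "complex \<Rightarrow> complex \<Rightarrow> real" where
  "hdist z w = arcosh (1 + (cmod (z - w))\<^sup>2 / (2 * Im z * Im w))"

definition more_than_one :: "'a set \<Rightarrow> bool" where
  "more_than_one S \<longleftrightarrow> (\<exists>z\<in>S. \<exists>w\<in>S. z \<noteq> w)"

definition dirichlet :: "mat2 set \<Rightarrow> complex \<Rightarrow> complex set" where
  "dirichlet G p = {z \<in> uhp. \<forall>g\<in>G. hdist z p \<le> hdist z (mob g p)}"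

definition trivial_stabilizer :: "mat2 set \<Rightarrow> complex \<Rightarrow> bool" where
  "trivial_stabilizer G p \<longleftrightarrow> (\<forall>g\<in>G. mob g p = p \<longrightarrow> is_id_psl g)"

text \<open>Elements g whose bisector between p and g p carries a side of the Dirichlet polygon.\<close>
definition dirichlet_side_elts :: "mat2 set \<Rightarrow> complex \<Rightarrow> mat2 set" where
  "dirichlet_side_elts G p = {g \<in> G. mob g p \<noteq> p \<and>
     more_than_one {z \<in> dirichlet G p. hdist z p = hdist z (mob g p)}}"

definition geometrically_finite :: "mat2 set \<Rightarrow> bool" where
  "geometrically_finite G \<longleftrightarrow>
     (\<exists>p\<in>uhp. trivial_stabilizer G p \<and> finite (dirichlet_side_elts G p))"

definition harea :: "complex set \<Rightarrow> ennreal" where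
  "harea S = (\<integral>\<^sup>+ z. ennreal (indicator S z / (Im z)\<^sup>2) \<partial>lborel)"

definition quotient_infinite_area :: "mat2 set \<Rightarrow> bool" where
  "quotient_infinite_area G \<longleftrightarrow>
     (\<exists>p\<in>uhp. trivial_stabilizer G p \<and> harea (dirichlet G p) = \<infinity>)"

text \<open>Gamma\H is compact iff some compact subset of H has Gamma-translates covering H.\<close>
definition cocompact :: "mat2 set \<Rightarrow> bool" where
  "cocompact G \<longleftrightarrow> (\<exists>C. compact C \<and> C \<subseteq> uhp \<and> uhp \<subseteq> (\<Union>g\<in>G. mob g ` C))"

definition orbit :: "mat2 set \<Rightarrow> complex \<Rightarrow> complex set" where
  "orbit G z = (\<lambda>g. mob g z) ` G"

text \<open>Limit set: accumulation points of an orbit, split into its real part and the point infinity.\<close>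
definition real_limit_set :: "mat2 set \<Rightarrow> real set" where
  "real_limit_set G = {x. complex_of_real x islimpt orbit G \<i>}"

definition infty_in_limit_set :: "mat2 set \<Rightarrow> bool" where
  "infty_in_limit_set G \<longleftrightarrow> \<not> bounded (orbit G \<i>)"

definition ordinary_set_nbhd_infty :: "mat2 set \<Rightarrow> bool" where
  "ordinary_set_nbhd_infty G \<longleftrightarrow> \<not> infty_in_limit_set G \<and>
     (\<exists>R. \<forall>x. \<bar>x\<bar> > R \<longrightarrow> x \<notin> real_limit_set G)"

text \<open>Isometric spheres (only for c \<noteq> 0) and their exteriors.\<close>
definition isom_sphere :: "mat2 \<Rightarrow> complex set" where
  "isom_sphere g = {z \<in> uhp. cmod (of_real (mc g) * z + of_real (md g)) = 1}"

definition isom_ext :: "mat2 \<Rightarrow> complex set" where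
  "isom_ext g = {z \<in> uhp. cmod (of_real (mc g) * z + of_real (md g)) > 1}"

definition Kset :: "mat2 set \<Rightarrow> complex set" where
  "Kset G = uhp \<inter> \<Inter> {isom_ext g | g. g \<in> G \<and> \<not> is_id_psl g \<and> mc g \<noteq> 0}"

definition bdryH :: "complex set \<Rightarrow> complex set" where
  "bdryH S = frontier S \<inter> uhp"

definition Gamma_REL :: "mat2 set \<Rightarrow> mat2 set" where
  "Gamma_REL G = {g \<in> G. \<not> is_id_psl g \<and> mc g \<noteq> 0 \<and>
      more_than_one (isom_sphere g \<inter> bdryH (Kset G))}"

definition REL :: "mat2 set \<Rightarrow> complex set set" where
  "REL G = isom_sphere ` Gamma_REL G"

inductive_set gen_group :: "mat2 set \<Rightarrow> mat2 set" for S where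
  gen_id: "mid \<in> gen_group S"
| gen_base: "s \<in> S \<Longrightarrow> s \<in> gen_group S"
| gen_mul: "x \<in> gen_group S \<Longrightarrow> y \<in> gen_group S \<Longrightarrow> mmul x y \<in> gen_group S"
| gen_inv: "x \<in> gen_group S \<Longrightarrow> minv x \<in> gen_group S"

definition Wset :: "mat2 set \<Rightarrow> real \<Rightarrow> real \<Rightarrow> complex set" where
  "Wset G a' b' = Kset G \<inter> {z. a' < Re z \<and> Re z < b'}"

definition translation :: "real \<Rightarrow> mat2" where
  "translation l = (1, l, 0, 1)"

definition Gamma_W :: "mat2 set \<Rightarrow> real \<Rightarrow> real \<Rightarrow> mat2 set" where
  "Gamma_W G a' b' = gen_group (insert (translation (b' - a')) (Gamma_REL G))"

definition REL_W :: "mat2 set \<Rightarrow> real \<Rightarrow> real \<Rightarrow> complex set set" where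
  "REL_W G a' b' = {isom_sphere g | g. g \<in> Gamma_W G a' b' \<and> mc g \<noteq> 0 \<and>
      more_than_one (isom_sphere g \<inter> bdryH (Wset G a' b'))}"

end

theory Submission
  imports Defs
begin

text \<open>The orbit of i is bounded because \<infinity> is an ordinary point. Hence no nontrivial element
  fixes \<infinity> (a non-parabolic one would be hyperbolic and its powers would drive i to \<infinity>), and by
  discreteness the entries c are even bounded away from 0. So K contains every point high enough
  and, following vertical segments, every point outside the strip \<alpha> \<le> Re z \<le> \<beta> that contains
  the boundary of K.

  Elements of \<Gamma>_W are reduced words in the translation by \<lambda> and nontrivial elements of \<Gamma>. A
  ping-pong argument shows that if the isometric sphere of such a word meets the closure of W, the
  word is a translation followed by a single letter of \<Gamma>, whose isometric sphere it shares. That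
  sphere lies outside K, hence over the strip between \<alpha> and \<beta>, where the boundaries of W and K
  agree. Only discreteness, the absence of parabolic elements, the neighbourhood of \<infinity> in the
  ordinary set and the bounds \<alpha> \<le> Re z \<le> \<beta> on the boundary of K are used.\<close>

lemma mmul_assoc: "mmul (mmul x y) z = mmul x (mmul y z)"
  by (cases x; cases y; cases z) (simp add: mmul_def algebra_simps)

lemma mmul_mid_left [simp]: "mmul mid x = x"
  and mmul_mid_right [simp]: "mmul x mid = x"
  by (cases x; simp add: mmul_def mid_def)+

lemma mneg_mneg [simp]: "mneg (mneg x) = x"
  by (cases x) (simp add: mneg_def)

lemma mmul_mneg_left: "mmul (mneg x) y = mneg (mmul x y)"
  and mmul_mneg_right: "mmul x (mneg y) = mneg (mmul x y)"
  by (cases x; cases y; simp add: mmul_def mneg_def)+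

lemma minv_mmul: "minv (mmul x y) = mmul (minv y) (minv x)"
  by (cases x; cases y) (simp add: minv_def mmul_def algebra_simps)

lemma minv_mneg: "minv (mneg x) = mneg (minv x)"
  by (cases x) (simp add: minv_def mneg_def)

lemma mmul_minv_left: "x \<in> SL2 \<Longrightarrow> mmul (minv x) x = mid"
  and mmul_minv_right: "x \<in> SL2 \<Longrightarrow> mmul x (minv x) = mid"
  by (cases x; simp add: minv_def mmul_def SL2_def mid_def algebra_simps)+

lemma translation_add: "mmul (translation a) (translation b) = translation (a + b)"
  by (simp add: mmul_def translation_def)

lemma translation_0: "translation 0 = mid"
  by (simp add: translation_def mid_def)

lemma minv_translation: "minv (translation a) = translation (- a)"
  by (simp add: minv_def translation_def)

lemma is_id_psl_mneg [simp]: "is_id_psl (mneg g) \<longleftrightarrow> is_id_psl g"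
  unfolding is_id_psl_def by (metis mneg_mneg)

lemma is_id_psl_minv [simp]: "is_id_psl (minv g) \<longleftrightarrow> is_id_psl g"
  by (cases g) (auto simp: minv_def mid_def mneg_def is_id_psl_def)

lemma mc_mneg [simp]: "mc (mneg g) = - mc g"
  by (cases g) (simp add: mc_def mneg_def)

lemma mc_translation [simp]: "mc (translation l) = 0"
  by (simp add: mc_def translation_def)

lemma SL2_mmul: "g \<in> SL2 \<Longrightarrow> h \<in> SL2 \<Longrightarrow> mmul g h \<in> SL2"
proof (cases g; cases h)
  fix a b c d a' b' c' d'
  assume "g \<in> SL2" "h \<in> SL2" "g = (a, b, c, d)" "h = (a', b', c', d')"
  moreover have "(a*a' + b*c') * (c*b' + d*d') - (a*b' + b*d') * (c*a' + d*c')
     = (a*d - b*c) * (a'*d' - b'*c')" by (simp add: algebra_simps)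
  ultimately show "mmul g h \<in> SL2" by (simp add: SL2_def mmul_def)
qed

lemma SL2_minv: "g \<in> SL2 \<Longrightarrow> minv g \<in> SL2"
  by (cases g) (simp add: SL2_def minv_def algebra_simps)

lemma SL2_mneg: "g \<in> SL2 \<Longrightarrow> mneg g \<in> SL2"
  by (cases g) (simp add: SL2_def mneg_def)

lemma SL2_translation: "translation l \<in> SL2"
  by (simp add: SL2_def translation_def)

lemma norm_mat2_sq: "(norm (a, b, c, d :: real))\<^sup>2 = a\<^sup>2 + b\<^sup>2 + c\<^sup>2 + d\<^sup>2"
  by (simp add: norm_Pair add.assoc)

lemma norm_mmul_le: "norm (mmul x y) \<le> norm x * norm y"
proof -
  obtain a b c d a' b' c' d' where xy: "x = (a, b, c, d)" "y = (a', b', c', d')"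
    by (cases x; cases y) auto
  \<comment> \<open>Lagrange's identity for each entry of the product\<close>
  have "(norm (mmul x y))\<^sup>2 = (a*a' + b*c')\<^sup>2 + (a*b' + b*d')\<^sup>2 + (c*a' + d*c')\<^sup>2 + (c*b' + d*d')\<^sup>2"
    by (simp add: xy mmul_def norm_mat2_sq)
  also have "\<dots> = (a\<^sup>2 + b\<^sup>2 + c\<^sup>2 + d\<^sup>2) * (a'\<^sup>2 + b'\<^sup>2 + c'\<^sup>2 + d'\<^sup>2)
      - ((a*c' - b*a')\<^sup>2 + (a*d' - b*b')\<^sup>2 + (c*c' - d*a')\<^sup>2 + (c*d' - d*b')\<^sup>2)"
    by (simp add: power2_eq_square algebra_simps)
  also have "\<dots> \<le> (a\<^sup>2 + b\<^sup>2 + c\<^sup>2 + d\<^sup>2) * (a'\<^sup>2 + b'\<^sup>2 + c'\<^sup>2 + d'\<^sup>2)"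
    using zero_le_power2[of "a*c' - b*a'"] zero_le_power2[of "a*d' - b*b'"]
      zero_le_power2[of "c*c' - d*a'"] zero_le_power2[of "c*d' - d*b'"] by linarith
  also have "\<dots> = (norm x * norm y)\<^sup>2"
    by (simp add: xy norm_mat2_sq power_mult_distrib)
  finally show ?thesis
    by (simp add: power2_le_iff_abs_le)
qed

lemma norm_minv: "norm (minv x) = norm x"
  by (cases x) (simp add: minv_def norm_Pair add_ac)

lemma mmul_diff_right: "mmul x (y - z) = mmul x y - mmul x z"
  by (cases x; cases y; cases z) (simp add: mmul_def algebra_simps)

definition jfactor :: "mat2 \<Rightarrow> complex \<Rightarrow> complex" where
  "jfactor g z = of_real (mc g) * z + of_real (md g)"

lemma isom_sphere_iff: "z \<in> isom_sphere g \<longleftrightarrow> z \<in> uhp \<and> cmod (jfactor g z) = 1"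
  by (simp add: isom_sphere_def jfactor_def)

lemma jfactor_translation [simp]: "jfactor (translation l) z = 1"
  by (simp add: jfactor_def mc_def md_def translation_def)

lemma Im_mob: "g \<in> SL2 \<Longrightarrow> Im (mob g z) = Im z / (cmod (jfactor g z))\<^sup>2"
proof (cases g)
  fix a b c d assume "g \<in> SL2" and g: "g = (a, b, c, d)"
  then have "a * d - b * c = 1" by (simp add: SL2_def)
  moreover have "a * Im z * (c * Re z + d) - (a * Re z + b) * (c * Im z) = (a * d - b * c) * Im z"
    by (simp add: algebra_simps)
  ultimately show ?thesis
    by (simp add: g mob_def jfactor_def mc_def md_def Im_divide cmod_power2)
qed

lemma jfactor_nonzero: "g \<in> SL2 \<Longrightarrow> z \<in> uhp \<Longrightarrow> jfactor g z \<noteq> 0"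
  by (cases g) (auto simp: SL2_def uhp_def jfactor_def mc_def md_def complex_eq_iff)

lemma mob_uhp: "g \<in> SL2 \<Longrightarrow> z \<in> uhp \<Longrightarrow> mob g z \<in> uhp"
  using Im_mob[of g z] jfactor_nonzero[of g z] by (simp add: uhp_def)

lemma jfactor_mmul:
  assumes "g \<in> SL2" "h \<in> SL2" "z \<in> uhp"
  shows "jfactor (mmul g h) z = jfactor g (mob h z) * jfactor h z"
proof (cases g; cases h)
  fix a b c d a' b' c' d' assume g: "g = (a, b, c, d)" and h: "h = (a', b', c', d')"
  have "of_real c' * z + of_real d' \<noteq> 0"
    using jfactor_nonzero[OF assms(2,3)] by (simp add: jfactor_def h mc_def md_def)
  then show ?thesis
    by (simp add: jfactor_def g h mc_def md_def mmul_def mob_def field_simps)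
qed

lemma jfactor_minv_mob:
  assumes "g \<in> SL2" "z \<in> uhp"
  shows "jfactor (minv g) (mob g z) * jfactor g z = 1"
proof -
  have "jfactor (mmul (minv g) g) z = 1"
    by (simp add: mmul_minv_left[OF assms(1)] jfactor_def mid_def mc_def md_def)
  then show ?thesis
    using jfactor_mmul[OF SL2_minv[OF assms(1)] assms] by simp
qed

lemma Im_jfactor_i: "Im (jfactor g \<i>) = mc g"
  by (simp add: jfactor_def)

lemma Re_mob_translation: "Re (mob (translation l) z) = Re z + l"
  by (simp add: mob_def translation_def)

lemma fuchsian_mid: "fuchsian_group G \<Longrightarrow> mid \<in> G"
  and fuchsian_mmul: "fuchsian_group G \<Longrightarrow> g \<in> G \<Longrightarrow> h \<in> G \<Longrightarrow> mmul g h \<in> G"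
  and fuchsian_minv: "fuchsian_group G \<Longrightarrow> g \<in> G \<Longrightarrow> minv g \<in> G"
  and fuchsian_SL2: "fuchsian_group G \<Longrightarrow> g \<in> G \<Longrightarrow> g \<in> SL2"
  unfolding fuchsian_group_def by blast+

lemma fuchsian_mneg: "fuchsian_group G \<Longrightarrow> g \<in> G \<Longrightarrow> mneg g \<in> G"
proof -
  have "mneg g = mmul (mneg mid) g" by (simp add: mmul_mneg_left)
  then show "fuchsian_group G \<Longrightarrow> g \<in> G \<Longrightarrow> mneg g \<in> G"
    by (metis fuchsian_group_def fuchsian_mmul)
qed

lemma bounded_orbit_if_ordinary_nbhd_infty:
  "ordinary_set_nbhd_infty G \<Longrightarrow> \<exists>M\<ge>1. \<forall>g\<in>G. cmod (mob g \<i>) \<le> M"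
  unfolding ordinary_set_nbhd_infty_def infty_in_limit_set_def bounded_iff orbit_def
  by (metis (no_types, lifting) imageI max.cobounded1 max.cobounded2 order_trans)

lemma abs_diag_eq_1_if_mc_eq_0:
  assumes G: "fuchsian_group G" and M: "\<forall>g\<in>G. cmod (mob g \<i>) \<le> M"
    and g: "(a, b, 0, d) \<in> G"
  shows "\<bar>a\<bar> = 1"
proof (rule ccontr)
  assume "\<bar>a\<bar> \<noteq> 1"
  have det: "a * d = 1" using fuchsian_SL2[OF G g] by (simp add: SL2_def)
  \<comment> \<open>either g or its inverse (d, -b, 0, a) expands the imaginary axis\<close>
  obtain p q r where h: "(p, q, 0, r) \<in> G" "p * r = 1" "1 < \<bar>p\<bar>"
  proof (cases "1 < \<bar>a\<bar>")
    case True
    then show ?thesis using that g det by blast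
  next
    case False
    with \<open>\<bar>a\<bar> \<noteq> 1\<close> have "\<bar>a\<bar> < 1" by simp
    moreover have "\<bar>a\<bar> * \<bar>d\<bar> = 1" using det by (simp add: abs_mult[symmetric])
    ultimately have "1 < \<bar>d\<bar>"
      using mult_left_le[of "\<bar>d\<bar>" "\<bar>a\<bar>"] by force
    moreover have "(d, -b, 0, a) \<in> G" using fuchsian_minv[OF G g] by (simp add: minv_def)
    ultimately show ?thesis using that det by (simp add: mult.commute)
  qed
  define hpow where "hpow n = (mmul (p, q, 0, r) ^^ n) mid" for n
  have hpow_G: "hpow n \<in> G" for n
    by (induction n) (simp_all add: hpow_def fuchsian_mid[OF G] fuchsian_mmul[OF G h(1)])
  have hpow_form: "\<exists>s. hpow n = (p ^ n, s, 0, r ^ n)" for n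
    by (induction n) (auto simp: hpow_def mid_def mmul_def)
  have "Im (mob (hpow n) \<i>) = (p\<^sup>2) ^ n" for n
  proof -
    obtain s where "hpow n = (p ^ n, s, 0, r ^ n)" using hpow_form by blast
    then have "Im (mob (hpow n) \<i>) = p ^ n / r ^ n"
      by (simp add: mob_def Im_divide power2_eq_square)
    also have "\<dots> = (p / r) ^ n"
      by (simp add: power_divide)
    also have "p / r = p\<^sup>2"
      using h(2) by (auto simp: divide_eq_eq power2_eq_square mult.assoc)
    finally show ?thesis .
  qed
  then have "(p\<^sup>2) ^ n \<le> M" for n
    using M hpow_G abs_Im_le_cmod[of "mob (hpow n) \<i>"] by (metis abs_ge_self order_trans)
  moreover have "1 < p\<^sup>2" using one_less_power[OF h(3), of 2] by simp
  ultimately show False using real_arch_pow not_le by metis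
qed

lemma mc_nonzero_if_no_parabolic:
  assumes G: "fuchsian_group G" and np: "\<forall>g\<in>G. \<not> parabolic_elt g"
    and M: "\<forall>g\<in>G. cmod (mob g \<i>) \<le> M" and g: "g \<in> G" "\<not> is_id_psl g"
  shows "mc g \<noteq> 0"
proof
  assume "mc g = 0"
  then obtain a b d where g_eq: "g = (a, b, 0, d)" by (cases g) (auto simp: mc_def)
  have "\<bar>a\<bar> = 1" using abs_diag_eq_1_if_mc_eq_0[OF G M] g(1) by (simp add: g_eq)
  moreover have "a * d = 1" using fuchsian_SL2[OF G g(1)] by (simp add: g_eq SL2_def)
  ultimately have "\<bar>mtrace g\<bar> = 2" by (auto simp: g_eq mtrace_def abs_if split: if_splits)
  then show False using np g unfolding parabolic_elt_def by blast
qed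

lemma fuchsian_bounded_subset_finite:
  assumes G: "fuchsian_group G" and "S \<subseteq> G" and "bounded S"
  shows "finite S"
proof -
  obtain B where B: "0 < B" "\<forall>g\<in>S. norm g \<le> B"
    using \<open>bounded S\<close> unfolding bounded_pos by blast
  obtain e where e: "0 < e" "\<forall>h\<in>G. dist h mid < e \<longrightarrow> h = mid"
    using G fuchsian_mid[OF G] unfolding fuchsian_group_def by blast
  have "g = h" if "g \<in> S" "h \<in> S" "dist g h < e / B" for g h
  proof -
    have gG: "g \<in> G" and hG: "h \<in> G" using that \<open>S \<subseteq> G\<close> by auto
    have gS: "g \<in> SL2" using fuchsian_SL2[OF G gG] .
    \<comment> \<open>left translation by the inverse of g is B-Lipschitz and sends g to the identity\<close>
    have "dist (mmul (minv g) h) mid = norm (mmul (minv g) (h - g))"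
      by (simp add: mmul_diff_right mmul_minv_left[OF gS] dist_norm)
    also have "\<dots> \<le> norm g * dist g h"
      using norm_mmul_le[of "minv g" "h - g"] by (simp add: norm_minv dist_norm norm_minus_commute)
    also have "\<dots> \<le> B * dist g h"
      using B that(1) by (simp add: mult_right_mono)
    also have "\<dots> < e"
      using that(3) B(1) by (simp add: pos_less_divide_eq mult.commute)
    finally have "mmul (minv g) h = mid"
      using e(2) fuchsian_mmul[OF G fuchsian_minv[OF G gG] hG] by blast
    then show "g = h"
      by (metis mmul_assoc mmul_mid_left mmul_mid_right mmul_minv_right[OF gS])
  qed
  then have "uniform_discrete S"
    unfolding uniform_discrete_def using e(1) B(1) by (meson divide_pos_pos)
  with \<open>bounded S\<close> show ?thesis
    using uniform_discrete_finite_iff by blast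
qed

lemma entries_bound_of_mob_i:
  assumes "(a, b, c, d) \<in> SL2" "cmod (mob (a, b, c, d) \<i>) \<le> M"
  shows "a\<^sup>2 + b\<^sup>2 \<le> M\<^sup>2 * (c\<^sup>2 + d\<^sup>2)"
proof -
  have "cmod (of_real c * \<i> + of_real d) \<noteq> 0"
    using jfactor_nonzero[OF assms(1), of \<i>] by (simp add: jfactor_def mc_def md_def uhp_def)
  then have "cmod (of_real a * \<i> + of_real b) \<le> M * cmod (of_real c * \<i> + of_real d)"
    using assms(2) by (simp add: mob_def norm_divide divide_le_eq)
  then have "(cmod (of_real a * \<i> + of_real b))\<^sup>2 \<le> (M * cmod (of_real c * \<i> + of_real d))\<^sup>2"
    by (intro power_mono) auto
  then show ?thesis
    by (simp add: power_mult_distrib cmod_power2 add.commute)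
qed

lemma quadratic_bound:
  fixes N x X :: real
  assumes "1 \<le> N" "0 \<le> x" "X \<le> N * (1 + x)" "x * X \<le> 2 + 2 * N * (1 + X)"
  shows "X \<le> 7 * N\<^sup>2"
proof (rule ccontr)
  assume "\<not> X \<le> 7 * N\<^sup>2"
  then have X: "7 * N\<^sup>2 < X" by simp
  have "1 \<le> N\<^sup>2" using assms(1) by (simp add: one_le_power)
  then have "0 < X" using X by linarith
  have "X * X \<le> N * X + N * (x * X)"
    using mult_right_mono[OF assms(3), of X] \<open>0 < X\<close> by (simp add: algebra_simps)
  also have "\<dots> \<le> N * X + N * (2 + 2 * N * (1 + X))"
    using assms(1,4) by simp
  also have "\<dots> \<le> 3 * N\<^sup>2 * X + 4 * N\<^sup>2"
  proof -
    have "N \<le> N\<^sup>2" using assms(1) by (simp add: power2_eq_square)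
    moreover from this have "N * X \<le> N\<^sup>2 * X" using \<open>0 < X\<close> by (simp add: mult_right_mono)
    moreover have "N * (2 + 2 * N * (1 + X)) = 2 * N + 2 * N\<^sup>2 + 2 * (N\<^sup>2 * X)"
      by (simp add: power2_eq_square algebra_simps)
    ultimately show ?thesis by linarith
  qed
  also have "\<dots> < X * X"
  proof -
    have "7 * N\<^sup>2 * X < X * X" using X \<open>0 < X\<close> by (rule mult_strict_right_mono)
    moreover have "4 * N\<^sup>2 \<le> 4 * N\<^sup>2 * X"
      using X \<open>1 \<le> N\<^sup>2\<close> by (simp add: mult_le_cancel_left1)
    ultimately show ?thesis by simp
  qed
  finally show False by simp
qed

lemma diag_sq_bound:
  assumes G: "fuchsian_group G" and "1 \<le> M" and M: "\<forall>g\<in>G. cmod (mob g \<i>) \<le> M"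
    and g: "(a, b, c, d) \<in> G" and "\<bar>c\<bar> \<le> 1" and "a\<^sup>2 \<le> d\<^sup>2"
  shows "d\<^sup>2 \<le> 7 * (M\<^sup>2)\<^sup>2"
proof (rule quadratic_bound)
  show "1 \<le> M\<^sup>2" using \<open>1 \<le> M\<close> by (simp add: one_le_power)
  have "c\<^sup>2 \<le> 1" using \<open>\<bar>c\<bar> \<le> 1\<close> by (metis abs_le_square_iff abs_one one_power2)
  have ginv: "(d, -b, -c, a) \<in> G" using fuchsian_minv[OF G g] by (simp add: minv_def)
  have "a\<^sup>2 + b\<^sup>2 \<le> M\<^sup>2 * (c\<^sup>2 + d\<^sup>2)"
    using entries_bound_of_mob_i fuchsian_SL2[OF G g] M g by blast
  also have "\<dots> \<le> M\<^sup>2 * (1 + d\<^sup>2)"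
    using \<open>c\<^sup>2 \<le> 1\<close> by (simp add: mult_left_mono)
  finally have b: "b\<^sup>2 \<le> M\<^sup>2 * (1 + d\<^sup>2)" using zero_le_power2[of a] by linarith
  have "d\<^sup>2 + b\<^sup>2 \<le> M\<^sup>2 * (c\<^sup>2 + a\<^sup>2)"
    using entries_bound_of_mob_i[of d "-b" "-c" a] fuchsian_SL2[OF G ginv] M ginv by simp
  also have "\<dots> \<le> M\<^sup>2 * (1 + a\<^sup>2)"
    using \<open>c\<^sup>2 \<le> 1\<close> by (simp add: mult_left_mono)
  finally show "d\<^sup>2 \<le> M\<^sup>2 * (1 + a\<^sup>2)" using zero_le_power2[of b] by linarith
  show "0 \<le> a\<^sup>2" by simp
  have "a * d = 1 + b * c" using fuchsian_SL2[OF G g] by (simp add: SL2_def)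
  then have "a\<^sup>2 * d\<^sup>2 = (1 + b * c)\<^sup>2" by (simp flip: power_mult_distrib)
  also have "\<dots> \<le> 2 + 2 * (b * c)\<^sup>2"
    using zero_le_power2[of "1 - b * c"] by (simp add: power2_eq_square algebra_simps)
  also have "(b * c)\<^sup>2 \<le> b\<^sup>2"
    using \<open>c\<^sup>2 \<le> 1\<close> by (simp add: power_mult_distrib mult_left_le)
  finally show "a\<^sup>2 * d\<^sup>2 \<le> 2 + 2 * M\<^sup>2 * (1 + d\<^sup>2)"
    using b by simp
qed

lemma bounded_abs_mc_le_1:
  assumes G: "fuchsian_group G" and "1 \<le> M" and M: "\<forall>g\<in>G. cmod (mob g \<i>) \<le> M"
  shows "bounded {g \<in> G. \<bar>mc g\<bar> \<le> 1}"
proof -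
  define D where "D = 7 * (M\<^sup>2)\<^sup>2"
  have "(norm g)\<^sup>2 \<le> 2 * D + M\<^sup>2 * (1 + D) + 1" if "g \<in> G" "\<bar>mc g\<bar> \<le> 1" for g
  proof -
    obtain a b c d where g: "g = (a, b, c, d)" by (cases g)
    have c: "\<bar>c\<bar> \<le> 1" using that(2) by (simp add: g mc_def)
    have ginv: "(d, -b, -c, a) \<in> G" using fuchsian_minv[OF G that(1)] by (simp add: g minv_def)
    have diag: "a\<^sup>2 \<le> D" "d\<^sup>2 \<le> D"
      using diag_sq_bound[OF G \<open>1 \<le> M\<close> M] that(1) ginv c unfolding D_def g
      by (smt (verit) abs_minus_cancel)+
    have "c\<^sup>2 \<le> 1" using c by (metis abs_le_square_iff abs_one one_power2)
    have "a\<^sup>2 + b\<^sup>2 \<le> M\<^sup>2 * (c\<^sup>2 + d\<^sup>2)"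
      using entries_bound_of_mob_i fuchsian_SL2[OF G that(1)] M that(1) unfolding g by blast
    also have "\<dots> \<le> M\<^sup>2 * (1 + D)"
      using \<open>c\<^sup>2 \<le> 1\<close> diag by (intro mult_left_mono add_mono) auto
    finally have "b\<^sup>2 \<le> M\<^sup>2 * (1 + D)" using zero_le_power2[of a] by linarith
    then show ?thesis using diag \<open>c\<^sup>2 \<le> 1\<close> by (simp add: g norm_mat2_sq)
  qed
  then show ?thesis
    unfolding bounded_iff by (metis (mono_tags, lifting) mem_Collect_eq real_le_rsqrt)
qed

lemma mc_bounded_below:
  assumes G: "fuchsian_group G" and np: "\<forall>g\<in>G. \<not> parabolic_elt g"
    and "1 \<le> M" and M: "\<forall>g\<in>G. cmod (mob g \<i>) \<le> M"
  obtains \<delta> where "0 < \<delta>" "\<forall>g\<in>G. \<not> is_id_psl g \<longrightarrow> \<delta> \<le> \<bar>mc g\<bar>"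
proof -
  define C where "C = (\<lambda>g. \<bar>mc g\<bar>) ` {g \<in> G. \<bar>mc g\<bar> \<le> 1 \<and> \<not> is_id_psl g}"
  have "finite {g \<in> G. \<bar>mc g\<bar> \<le> 1}"
    using fuchsian_bounded_subset_finite[OF G _ bounded_abs_mc_le_1[OF G \<open>1 \<le> M\<close> M]] by blast
  then have "finite C"
    unfolding C_def by (rule finite_imageI[OF finite_subset, rotated]) auto
  moreover have "0 < x" if "x \<in> C" for x
    using that mc_nonzero_if_no_parabolic[OF G np M] by (auto simp: C_def)
  ultimately have "0 < Min (insert 1 C)" by simp
  moreover have "Min (insert 1 C) \<le> \<bar>mc g\<bar>" if "g \<in> G" "\<not> is_id_psl g" for g
  proof (cases "\<bar>mc g\<bar> \<le> 1")
    case True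
    then have "\<bar>mc g\<bar> \<in> C" using that by (auto simp: C_def)
    then show ?thesis using \<open>finite C\<close> by simp
  next
    case False
    then show ?thesis using \<open>finite C\<close> by (simp add: Min_le_iff)
  qed
  ultimately show ?thesis using that by blast
qed

lemma Kset_iff:
  "z \<in> Kset G \<longleftrightarrow> z \<in> uhp \<and> (\<forall>g\<in>G. \<not> is_id_psl g \<longrightarrow> mc g \<noteq> 0 \<longrightarrow> 1 < cmod (jfactor g z))"
  unfolding Kset_def isom_ext_def jfactor_def by blast

lemma Kset_contains_high_points:
  assumes "0 < \<delta>" "\<forall>g\<in>G. \<not> is_id_psl g \<longrightarrow> \<delta> \<le> \<bar>mc g\<bar>" "1 < \<delta> * Im z"
  shows "z \<in> Kset G"
  unfolding Kset_iff
proof (intro conjI ballI impI)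
  have "0 < Im z" using zero_less_mult_pos[of \<delta> "Im z"] assms(1,3) by simp
  then show "z \<in> uhp" by (simp add: uhp_def)
  fix g assume "g \<in> G" "\<not> is_id_psl g" "mc g \<noteq> 0"
  then have "\<delta> * Im z \<le> \<bar>mc g\<bar> * Im z"
    using assms(2) \<open>0 < Im z\<close> by (simp add: mult_right_mono)
  also have "\<dots> = \<bar>Im (jfactor g z)\<bar>"
    using \<open>0 < Im z\<close> by (simp add: jfactor_def abs_mult)
  also have "\<dots> \<le> cmod (jfactor g z)"
    by (rule abs_Im_le_cmod)
  finally show "1 < cmod (jfactor g z)" using assms(3) by linarith
qed

lemma vertical_segment_meets_bdryH:
  assumes "z \<in> uhp" "z \<notin> S" "Complex (Re z) y \<in> S" "0 < y"
  obtains q where "q \<in> bdryH S" "Re q = Re z"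
proof -
  let ?p = "Complex (Re z) y"
  let ?L = "{w. 0 < Im w} \<inter> {w. Re z \<le> Re w} \<inter> {w. Re w \<le> Re z}"
  have "closed_segment z ?p \<inter> frontier S \<noteq> {}"
    using assms by (intro connected_Int_frontier) auto
  then obtain q where q: "q \<in> closed_segment z ?p" "q \<in> frontier S" by blast
  have "convex ?L"
    by (intro convex_Int convex_halfspace_Im_gt convex_halfspace_Re_ge convex_halfspace_Re_le)
  then have "closed_segment z ?p \<subseteq> ?L"
    using assms(1,4) by (intro closed_segment_subset) (auto simp: uhp_def)
  then have "0 < Im q" "Re q = Re z" using q(1) by (auto simp: subset_iff intro!: order.antisym)
  then show ?thesis
    using q(2) that by (simp add: bdryH_def uhp_def)
qed

lemma Kset_outside_strip:
  assumes "0 < \<delta>" "\<forall>g\<in>G. \<not> is_id_psl g \<longrightarrow> \<delta> \<le> \<bar>mc g\<bar>"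
    and "\<forall>q\<in>bdryH (Kset G). a \<le> Re q \<and> Re q \<le> b"
    and "z \<in> uhp" "Re z < a \<or> b < Re z"
  shows "z \<in> Kset G"
proof (rule ccontr)
  assume "z \<notin> Kset G"
  moreover have "Complex (Re z) (2 / \<delta>) \<in> Kset G"
    using assms(1,2) by (intro Kset_contains_high_points) auto
  ultimately obtain q where "q \<in> bdryH (Kset G)" "Re q = Re z"
    using vertical_segment_meets_bdryH assms(1,4) by (metis divide_pos_pos zero_less_numeral)
  then show False using assms(3,5) by fastforce
qed

lemma open_vertical_strip: "open {z. a < Re z \<and> Re z < b}"
  by (intro open_Collect_conj open_Collect_less) (auto intro: continuous_intros)

lemma bdryH_Int_open_strip_iff:
  assumes "a < Re z" "Re z < b"
  shows "z \<in> bdryH (K \<inter> {z. a < Re z \<and> Re z < b}) \<longleftrightarrow> z \<in> bdryH K"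
proof -
  let ?S = "{z. a < Re z \<and> Re z < b}"
  have "z \<in> closure (K \<inter> ?S) \<longleftrightarrow> z \<in> closure K"
    using open_Int_closure_subset[OF open_vertical_strip, of a b K] closure_mono[of "K \<inter> ?S" K]
      assms by (auto simp: Int_commute)
  moreover have "z \<in> interior (K \<inter> ?S) \<longleftrightarrow> z \<in> interior K"
    using assms by (simp add: interior_open[OF open_vertical_strip])
  ultimately show ?thesis
    by (simp add: bdryH_def frontier_def)
qed

lemma bdryH_Int_strip_subset:
  assumes "z \<in> bdryH (K \<inter> {z. a < Re z \<and> Re z < b})"
  shows "z \<in> closure K" "a \<le> Re z" "Re z \<le> b"
proof -
  let ?S = "{z. a < Re z \<and> Re z < b}"
  have z: "z \<in> closure (K \<inter> ?S)"
    using assms by (simp add: bdryH_def frontier_def)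
  then show "z \<in> closure K"
    using closure_mono[of "K \<inter> ?S" K] by blast
  have "closed {z. a \<le> Re z \<and> Re z \<le> b}"
    by (intro closed_Collect_conj closed_Collect_le) (auto intro: continuous_intros)
  then have "closure (K \<inter> ?S) \<subseteq> {z. a \<le> Re z \<and> Re z \<le> b}"
    by (rule closure_minimal[rotated]) auto
  then show "a \<le> Re z" "Re z \<le> b" using z by auto
qed

lemma more_than_one_mono: "A \<subseteq> B \<Longrightarrow> more_than_one A \<Longrightarrow> more_than_one B"
  unfolding more_than_one_def by blast

lemma REL_subset_REL_W:
  assumes bdry: "\<forall>z\<in>bdryH (Kset G). \<alpha> \<le> Re z \<and> Re z \<le> \<beta>" and "\<alpha>' < \<alpha>" "\<beta> < \<beta>'"
  shows "REL G \<subseteq> REL_W G \<alpha>' \<beta>'"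
proof
  fix x assume "x \<in> REL G"
  then obtain g where x: "x = isom_sphere g" and g: "g \<in> Gamma_REL G"
    by (auto simp: REL_def)
  have "bdryH (Kset G) \<subseteq> bdryH (Wset G \<alpha>' \<beta>')"
    using bdry assms(2,3) by (auto simp: Wset_def bdryH_Int_open_strip_iff)
  then have "more_than_one (isom_sphere g \<inter> bdryH (Wset G \<alpha>' \<beta>'))"
    using g by (auto simp: Gamma_REL_def elim!: more_than_one_mono[rotated])
  moreover have "g \<in> Gamma_W G \<alpha>' \<beta>'"
    using g by (simp add: Gamma_W_def gen_base)
  moreover have "mc g \<noteq> 0"
    using g by (simp add: Gamma_REL_def)
  ultimately show "x \<in> REL_W G \<alpha>' \<beta>'"
    unfolding REL_W_def using x by blast
qed

text \<open>Reduced words are the products \<plusminus>T^k0 g1 T^k1 g2 \<dots> with T the translation by l, gi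
  nontrivial elements of G and ki \<noteq> 0 for i > 0; the shape records the last letter.\<close>

datatype word_shape = Power_of_T | Ends_in_G | Ends_in_T

inductive reduced_word :: "mat2 set \<Rightarrow> real \<Rightarrow> word_shape \<Rightarrow> mat2 \<Rightarrow> bool" for G l where
  power_of_T: "reduced_word G l Power_of_T (translation (of_int k * l))"
| neg_power_of_T: "reduced_word G l Power_of_T (mneg (translation (of_int k * l)))"
| append_G: "reduced_word G l s y \<Longrightarrow> s \<noteq> Ends_in_G \<Longrightarrow> g \<in> G \<Longrightarrow> \<not> is_id_psl g
    \<Longrightarrow> reduced_word G l Ends_in_G (mmul y g)"
| append_T: "reduced_word G l Ends_in_G x \<Longrightarrow> k \<noteq> 0
    \<Longrightarrow> reduced_word G l Ends_in_T (mmul x (translation (of_int k * l)))"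

lemma reduced_word_mid: "reduced_word G l Power_of_T mid"
  using power_of_T[of G l 0] by (simp add: translation_0)

lemma reduced_word_Power_of_T_cases:
  "reduced_word G l Power_of_T y \<Longrightarrow> \<exists>t. y = translation t \<or> y = mneg (translation t)"
  by (cases rule: reduced_word.cases) auto

lemma reduced_word_SL2:
  assumes "fuchsian_group G" "reduced_word G l s w"
  shows "w \<in> SL2"
  using assms(2) by (induction rule: reduced_word.induct)
    (auto intro: SL2_mmul SL2_mneg SL2_translation fuchsian_SL2[OF assms(1)])

lemma reduced_word_mneg:
  assumes G: "fuchsian_group G" and "reduced_word G l s w"
  shows "reduced_word G l s (mneg w)"
  using assms(2)
proof (induction rule: reduced_word.induct)
  case (power_of_T k)
  then show ?case by (rule neg_power_of_T)
next
  case (neg_power_of_T k)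
  then show ?case using reduced_word.power_of_T by simp
next
  case (append_G s y g)
  then have "reduced_word G l Ends_in_G (mmul y (mneg g))"
    by (intro reduced_word.append_G[where s = s]) (auto simp: fuchsian_mneg[OF G])
  then show ?case by (simp add: mmul_mneg_right)
next
  case (append_T x k)
  then show ?case using reduced_word.append_T[of G l "mneg x" k] by (simp add: mmul_mneg_left)
qed

lemma reduced_word_mmul_translation:
  assumes "reduced_word G l s w"
  shows "\<exists>s'. reduced_word G l s' (mmul w (translation (of_int k * l)))"
  using assms
proof (induction rule: reduced_word.induct)
  case (power_of_T m)
  then show ?case
    using reduced_word.power_of_T[of G l "m + k"] by (auto simp: translation_add algebra_simps)
next
  case (neg_power_of_T m)
  then show ?case using reduced_word.neg_power_of_T[of G l "m + k"]
    by (auto simp: mmul_mneg_left translation_add algebra_simps)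
next
  case (append_G s y g)
  have yg: "reduced_word G l Ends_in_G (mmul y g)"
    using reduced_word.append_G[OF append_G.hyps] .
  then show ?case
    using reduced_word.append_T[OF yg] by (cases "k = 0") (auto simp: translation_0)
next
  case (append_T x m)
  have "mmul (mmul x (translation (of_int m * l))) (translation (of_int k * l))
      = mmul x (translation (of_int (m + k) * l))"
    by (simp add: mmul_assoc translation_add algebra_simps)
  then show ?case
    using append_T.hyps reduced_word.append_T[OF append_T.hyps(1), of "m + k"]
    by (cases "m + k = 0") (auto simp: translation_0)
qed

lemma reduced_word_mmul_G:
  assumes G: "fuchsian_group G" and w: "reduced_word G l s w" and g: "g \<in> G"
  shows "\<exists>s'. reduced_word G l s' (mmul w g)"
proof -
  have sign: "\<exists>s'. reduced_word G l s' (mmul v h)" if "reduced_word G l t v" "is_id_psl h" for t v h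
    using that reduced_word_mneg[OF G that(1)] by (auto simp: is_id_psl_def mmul_mneg_right)
  show ?thesis
  proof (cases "is_id_psl g \<or> s \<noteq> Ends_in_G")
    case True
    then show ?thesis using sign w g reduced_word.append_G[OF w _ g] by blast
  next
    case False
    \<comment> \<open>merge g with the last letter of w\<close>
    obtain t y h where w_eq: "w = mmul y h" and y: "reduced_word G l t y" "t \<noteq> Ends_in_G"
      and h: "h \<in> G"
      using w False by (cases rule: reduced_word.cases) auto
    have hg: "mmul h g \<in> G" using fuchsian_mmul[OF G h g] .
    have "mmul w g = mmul y (mmul h g)" by (simp add: w_eq mmul_assoc)
    then show ?thesis
      using sign[OF y(1)] reduced_word.append_G[OF y hg] by metis
  qed
qed

lemma reduced_word_mmul:
  assumes G: "fuchsian_group G" and "reduced_word G l s y" "reduced_word G l s' x"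
  shows "\<exists>s''. reduced_word G l s'' (mmul x y)"
  using assms(2,3)
proof (induction arbitrary: s' x rule: reduced_word.induct)
  case (power_of_T k)
  then show ?case using reduced_word_mmul_translation by blast
next
  case (neg_power_of_T k)
  then show ?case
    using reduced_word_mmul_translation reduced_word_mneg[OF G] by (metis mmul_mneg_right)
next
  case (append_G s y g)
  then obtain s'' where "reduced_word G l s'' (mmul x y)" by blast
  then show ?case using reduced_word_mmul_G[OF G _ append_G.hyps(3)] by (metis mmul_assoc)
next
  case (append_T y k)
  then obtain s'' where "reduced_word G l s'' (mmul x y)" by blast
  then show ?case using reduced_word_mmul_translation by (metis mmul_assoc)
qed

lemma reduced_word_minv:
  assumes G: "fuchsian_group G" and "reduced_word G l s x"
  shows "\<exists>s'. reduced_word G l s' (minv x)"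
  using assms(2)
proof (induction rule: reduced_word.induct)
  case (power_of_T k)
  then show ?case using reduced_word.power_of_T[of G l "- k"] by (auto simp: minv_translation)
next
  case (neg_power_of_T k)
  then show ?case using reduced_word.neg_power_of_T[of G l "- k"]
    by (auto simp: minv_translation minv_mneg)
next
  case (append_G s y g)
  have "reduced_word G l Ends_in_G (mmul mid (minv g))"
    using append_G.hyps(3,4)
    by (intro reduced_word.append_G[OF reduced_word_mid]) (auto simp: fuchsian_minv[OF G])
  then show ?case
    using append_G.IH reduced_word_mmul[OF G] by (metis minv_mmul mmul_mid_left)
next
  case (append_T x k)
  then show ?case
    using reduced_word.power_of_T[of G l "- k"] reduced_word_mmul[OF G]
    by (metis minv_mmul minv_translation mult_minus_left of_int_minus)
qed

lemma gen_group_reduced_word: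
  assumes G: "fuchsian_group G" and S: "\<forall>g\<in>S. g \<in> G \<and> \<not> is_id_psl g"
    and "x \<in> gen_group (insert (translation l) S)"
  shows "\<exists>s. reduced_word G l s x"
  using assms(3)
proof (induction rule: gen_group.induct)
  case gen_id
  then show ?case using reduced_word_mid by blast
next
  case (gen_base g)
  show ?case
  proof (cases "g = translation l")
    case True
    then show ?thesis using reduced_word.power_of_T[of G l 1] by auto
  next
    case False
    then have "reduced_word G l Ends_in_G (mmul mid g)"
      using gen_base S by (intro reduced_word.append_G[OF reduced_word_mid]) auto
    then show ?thesis by auto
  qed
next
  case (gen_mul x y)
  then show ?case using reduced_word_mmul[OF G] by blast
next
  case (gen_inv x)
  then show ?case using reduced_word_minv[OF G] by blast
qed

lemma Gamma_W_reduced_word: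
  assumes "fuchsian_group G" "w \<in> Gamma_W G a' b'"
  shows "\<exists>s. reduced_word G (b' - a') s w"
  using gen_group_reduced_word[OF assms(1) _ assms(2)[unfolded Gamma_W_def]]
  by (simp add: Gamma_REL_def)

locale strip_domain =
  fixes G :: "mat2 set" and K :: "complex set" and \<alpha> \<beta> :: real
  assumes fuchsian: "fuchsian_group G"
    and K_subset_uhp: "K \<subseteq> uhp"
    and jfactor_gt_1: "g \<in> G \<Longrightarrow> \<not> is_id_psl g \<Longrightarrow> z \<in> K \<Longrightarrow> 1 < cmod (jfactor g z)"
    and outside_strip_in_K: "z \<in> uhp \<Longrightarrow> Re z < \<alpha> \<or> \<beta> < Re z \<Longrightarrow> z \<in> K"
begin

lemma jfactor_ge_1_closure:
  assumes "g \<in> G" "\<not> is_id_psl g" "z \<in> closure K"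
  shows "1 \<le> cmod (jfactor g z)"
proof -
  have "closed {z. 1 \<le> cmod (jfactor g z)}"
    by (rule closed_Collect_le) (auto simp: jfactor_def intro!: continuous_intros)
  moreover have "K \<subseteq> {z. 1 \<le> cmod (jfactor g z)}"
    using jfactor_gt_1[OF assms(1,2)] by (auto simp: less_imp_le)
  ultimately show ?thesis
    using closure_minimal assms(3) by blast
qed

lemma mob_closure_in_strip:
  assumes g: "g \<in> G" "\<not> is_id_psl g" and z: "z \<in> closure K" "z \<in> uhp"
  shows "\<alpha> \<le> Re (mob g z) \<and> Re (mob g z) \<le> \<beta>"
proof -
  have gS: "g \<in> SL2" using fuchsian_SL2[OF fuchsian g(1)] .
  have "cmod (jfactor (minv g) (mob g z)) * cmod (jfactor g z) = 1"
    using jfactor_minv_mob[OF gS z(2)] by (metis norm_mult norm_one)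
  with jfactor_ge_1_closure[OF g z(1)] have "cmod (jfactor (minv g) (mob g z)) \<le> 1"
    by (metis mult_le_cancel_left1 norm_ge_zero linorder_not_le less_le_trans zero_less_one)
  then have "mob g z \<notin> K"
    using jfactor_gt_1[of "minv g"] fuchsian_minv[OF fuchsian g(1)] g(2) by force
  then show ?thesis
    using outside_strip_in_K mob_uhp[OF gS z(2)] by force
qed

text \<open>Ping-pong: nontrivial letters of G map the closure of K into the strip between \<alpha> and \<beta>,
  and nonzero powers of T map the closed strip between \<alpha>' and \<beta>' into K.\<close>
lemma reduced_word_jfactor:
  assumes "\<alpha>' < \<alpha>" "\<beta> < \<beta>'" and "reduced_word G (\<beta>' - \<alpha>') s w"
  shows "(s = Ends_in_G \<longrightarrow> (\<forall>z\<in>closure K \<inter> uhp. 1 < cmod (jfactor w z))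
            \<or> (\<exists>g\<in>G. \<not> is_id_psl g \<and> jfactor w = jfactor g))
       \<and> (s = Ends_in_T \<longrightarrow> (\<forall>z\<in>uhp. \<alpha>' \<le> Re z \<and> Re z \<le> \<beta>' \<longrightarrow> 1 < cmod (jfactor w z)))"
  using assms(3)
proof (induction rule: reduced_word.induct)
  case (append_G s y g)
  have gS: "g \<in> SL2" and yS: "y \<in> SL2"
    using fuchsian_SL2[OF fuchsian append_G.hyps(3)]
      reduced_word_SL2[OF fuchsian append_G.hyps(1)] .
  have jfactor_yg: "jfactor (mmul y g) z = jfactor y (mob g z) * jfactor g z" if "z \<in> uhp" for z
    using jfactor_mmul[OF yS gS that] .
  consider "s = Power_of_T" | "s = Ends_in_T" using append_G.hyps(2) by (cases s) auto
  then show ?case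
  proof cases
    case 1
    then obtain t where "y = translation t \<or> y = mneg (translation t)"
      using reduced_word_Power_of_T_cases append_G.hyps(1) by blast
    then have "jfactor (mmul y g) = jfactor g \<or> jfactor (mmul y g) = jfactor (mneg g)"
      by (auto simp: jfactor_def mc_def md_def mmul_def translation_def mneg_def split: prod.split)
    then have "\<exists>g'\<in>G. \<not> is_id_psl g' \<and> jfactor (mmul y g) = jfactor g'"
      using append_G.hyps(3,4) fuchsian_mneg[OF fuchsian append_G.hyps(3)] is_id_psl_mneg by metis
    then show ?thesis by simp
  next
    case 2
    have "1 < cmod (jfactor (mmul y g) z)" if z: "z \<in> closure K" "z \<in> uhp" for z
    proof -
      have "1 < cmod (jfactor y (mob g z))"
        using append_G.IH 2 mob_closure_in_strip[OF append_G.hyps(3,4) z] mob_uhp[OF gS z(2)]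
          assms(1,2) by auto
      moreover have "1 \<le> cmod (jfactor g z)"
        using jfactor_ge_1_closure[OF append_G.hyps(3,4) z(1)] .
      ultimately have "1 < cmod (jfactor y (mob g z)) * cmod (jfactor g z)"
        by (simp add: mult_le_cancel_left1 less_le_trans)
      then show ?thesis
        using jfactor_yg[OF z(2)] by (simp add: norm_mult)
    qed
    then show ?thesis by blast
  qed
next
  case (append_T x k)
  let ?l = "\<beta>' - \<alpha>'" and ?T = "translation (of_int k * (\<beta>' - \<alpha>'))"
  have xS: "x \<in> SL2" using reduced_word_SL2[OF fuchsian append_T.hyps(1)] .
  have x_on_K: "1 < cmod (jfactor x u)" if "u \<in> K" for u
    using append_T.IH that K_subset_uhp closure_subset jfactor_gt_1 by fastforce
  have "1 < cmod (jfactor (mmul x ?T) z)" if z: "z \<in> uhp" "\<alpha>' \<le> Re z" "Re z \<le> \<beta>'" for z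
  proof -
    have "0 \<le> ?l" using z by simp
    have "Re (mob ?T z) < \<alpha> \<or> \<beta> < Re (mob ?T z)"
    proof (cases "0 < k")
      case True
      then have "?l \<le> of_int k * ?l" using \<open>0 \<le> ?l\<close> by (simp add: mult_le_cancel_right1)
      then show ?thesis using z assms(2) by (simp add: Re_mob_translation)
    next
      case False
      then have "of_int k \<le> (-1::real)" using append_T.hyps(2) by simp
      then have "of_int k * ?l \<le> -1 * ?l" using \<open>0 \<le> ?l\<close> by (rule mult_right_mono)
      then show ?thesis using z assms(1) by (simp add: Re_mob_translation)
    qed
    then have "mob ?T z \<in> K"
      using outside_strip_in_K mob_uhp[OF SL2_translation z(1)] by blast
    then show ?thesis
      using x_on_K jfactor_mmul[OF xS SL2_translation z(1)] by simp
  qed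
  then show ?case by simp
qed simp_all

lemma reduced_word_unit_jfactor:
  assumes "\<alpha>' < \<alpha>" "\<beta> < \<beta>'" "reduced_word G (\<beta>' - \<alpha>') s w" "mc w \<noteq> 0"
    and z: "z \<in> isom_sphere w" "z \<in> closure K" "\<alpha>' \<le> Re z" "Re z \<le> \<beta>'"
  shows "\<exists>g\<in>G. \<not> is_id_psl g \<and> jfactor w = jfactor g"
proof -
  have "z \<in> closure K \<inter> uhp" "\<not> 1 < cmod (jfactor w z)"
    using z(1,2) by (auto simp: isom_sphere_iff)
  moreover have "s \<noteq> Power_of_T"
  proof
    assume "s = Power_of_T"
    then obtain t where "w = translation t \<or> w = mneg (translation t)"
      using reduced_word_Power_of_T_cases assms(3) by blast
    then show False using assms(4) by auto
  qed
  ultimately show ?thesis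
    using reduced_word_jfactor[OF assms(1-3)] z(3,4) by (cases s) blast+
qed

lemma isom_sphere_bdryH_Int_strip:
  assumes g: "g \<in> G" "\<not> is_id_psl g" and "\<alpha>' < \<alpha>" "\<beta> < \<beta>'"
    and u: "u \<in> isom_sphere g" "u \<in> bdryH (K \<inter> {z. \<alpha>' < Re z \<and> Re z < \<beta>'})"
  shows "u \<in> bdryH K"
proof -
  have "u \<notin> K"
  proof
    assume "u \<in> K"
    then have "1 < cmod (jfactor g u)" by (rule jfactor_gt_1[OF g])
    then show False using u(1) by (simp add: isom_sphere_iff)
  qed
  then have "\<alpha> \<le> Re u" "Re u \<le> \<beta>"
    using outside_strip_in_K[of u] u(1) by (force simp: isom_sphere_iff)+
  then show ?thesis
    using bdryH_Int_open_strip_iff[of \<alpha>' u \<beta>' K] u(2) assms(3,4) by simp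
qed

lemma REL_W_subset_REL:
  assumes K: "K = Kset G" and "\<alpha>' < \<alpha>" "\<beta> < \<beta>'"
  shows "REL_W G \<alpha>' \<beta>' \<subseteq> REL G"
proof
  let ?W = "Wset G \<alpha>' \<beta>'"
  have W_eq: "?W = K \<inter> {z. \<alpha>' < Re z \<and> Re z < \<beta>'}" by (simp add: Wset_def K)
  fix x assume "x \<in> REL_W G \<alpha>' \<beta>'"
  then obtain w where x: "x = isom_sphere w" and w: "w \<in> Gamma_W G \<alpha>' \<beta>'" "mc w \<noteq> 0"
    and two: "more_than_one (isom_sphere w \<inter> bdryH ?W)"
    by (auto simp: REL_W_def)
  then obtain z where z: "z \<in> isom_sphere w" "z \<in> bdryH (K \<inter> {z. \<alpha>' < Re z \<and> Re z < \<beta>'})"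
    unfolding W_eq more_than_one_def by blast
  obtain s where "reduced_word G (\<beta>' - \<alpha>') s w"
    using Gamma_W_reduced_word[OF fuchsian w(1)] by blast
  then obtain g where g: "g \<in> G" "\<not> is_id_psl g" "jfactor w = jfactor g"
    using reduced_word_unit_jfactor[OF assms(2,3) _ w(2) z(1) bdryH_Int_strip_subset[OF z(2)]]
    by blast
  have sphere: "isom_sphere w = isom_sphere g"
    using g(3) by (auto simp: isom_sphere_iff)
  have "u \<in> bdryH K" if "u \<in> isom_sphere g" "u \<in> bdryH ?W" for u
    using isom_sphere_bdryH_Int_strip[OF g(1,2) assms(2,3)] that by (simp add: W_eq)
  then have "isom_sphere g \<inter> bdryH ?W \<subseteq> isom_sphere g \<inter> bdryH (Kset G)"
    using K by blast
  then have "more_than_one (isom_sphere g \<inter> bdryH (Kset G))"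
    using two sphere more_than_one_mono by metis
  moreover have "mc g \<noteq> 0"
    using w(2) g(3) by (metis Im_jfactor_i)
  ultimately show "x \<in> REL G"
    using g x sphere by (auto simp: REL_def Gamma_REL_def)
qed

end

theorem lemma4p7:
  fixes G :: "mat2 set" and \<alpha> \<beta> \<alpha>' \<beta>' :: real
  assumes "fuchsian_group G"
    and "geometrically_finite G"
    and "\<not> cocompact G"
    and "\<exists>g\<in>G. hyperbolic_elt g"
    and "\<forall>g\<in>G. \<not> parabolic_elt g"
    and "quotient_infinite_area G"
    and "ordinary_set_nbhd_infty G"
    and "\<forall>z\<in>bdryH (Kset G). \<alpha> \<le> Re z"
    and "\<forall>a. (\<forall>z\<in>bdryH (Kset G). a \<le> Re z) \<longrightarrow> a \<le> \<alpha>"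
    and "\<forall>z\<in>bdryH (Kset G). Re z \<le> \<beta>"
    and "\<forall>b. (\<forall>z\<in>bdryH (Kset G). Re z \<le> b) \<longrightarrow> \<beta> \<le> b"
    and "\<alpha>' < \<alpha>" and "\<beta> < \<beta>'"
  shows "REL G = REL_W G \<alpha>' \<beta>'"
proof -
  obtain M where "1 \<le> M" "\<forall>g\<in>G. cmod (mob g \<i>) \<le> M"
    using bounded_orbit_if_ordinary_nbhd_infty[OF assms(7)] by blast
  then obtain \<delta> where \<delta>: "0 < \<delta>" "\<forall>g\<in>G. \<not> is_id_psl g \<longrightarrow> \<delta> \<le> \<bar>mc g\<bar>"
    using mc_bounded_below[OF assms(1,5)] by blast
  have bdry: "\<forall>z\<in>bdryH (Kset G). \<alpha> \<le> Re z \<and> Re z \<le> \<beta>"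
    using assms(8,10) by blast
  interpret strip_domain G "Kset G" \<alpha> \<beta>
  proof
    show "Kset G \<subseteq> uhp" by (auto simp: Kset_def)
    show "1 < cmod (jfactor g z)" if "g \<in> G" "\<not> is_id_psl g" "z \<in> Kset G" for g z
    proof -
      have "mc g \<noteq> 0" using \<delta> that(1,2) by fastforce
      then show ?thesis using that by (simp add: Kset_iff)
    qed
    show "z \<in> Kset G" if "z \<in> uhp" "Re z < \<alpha> \<or> \<beta> < Re z" for z
      using Kset_outside_strip[OF \<delta> bdry that] .
  qed (rule assms(1))
  show ?thesis
    using REL_subset_REL_W[OF bdry assms(12,13)] REL_W_subset_REL[OF refl assms(12,13)] by blast
qed

end
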